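(* Let $n\ge 1$. If $p(4,n)\neq 0$, then $n=8t$ or $n=8t-1$ for some integer $t\ge 2$.
   Context: For integers $m\ge 2$, $n\ge 1$, a valid $(m,n)$-sequence is a sequence $(a_1,\dots,a_{mn})$ with entries in $\{1,\dots,n\}$ in which each $k\in\{1,\dots,n\}$ occurs exactly $m$ times, and such that any two consecutive occurrences of $k$ are separated by exactly $k$ other terms; equivalently, there is an index $\theta_k$ such that $k$ occurs exactly at the positions $\theta_k,\ \theta_k+(k+1),\ \dots,\theta_k+(m-1)(k+1)$ (all in $\{1,\dots,mn\}$). The reversal of a valid sequence is again valid; $p(m,n)$ denotes the number of valid $(m,n)$-sequences counted up to reversal (i.e. the number of equivalence classes of valid sequences under identifying a sequence with its reversal). *)

theory Defs
  imports Main
begin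

text \<open>A valid (m,n)-sequence, represented as a list a of length m*n (position i of the
  paper is list index i-1).\<close>
definition valid_seq :: "nat \<Rightarrow> nat \<Rightarrow> nat list \<Rightarrow> bool" where
  "valid_seq m n a \<longleftrightarrow>
     length a = m * n \<and> set a \<subseteq> {1..n} \<and>
     (\<forall>k\<in>{1..n}. \<exists>\<theta>.
        {i. i < length a \<and> a ! i = k} = {\<theta> + j * (k + 1) | j. j < m})"

definition p :: "nat \<Rightarrow> nat \<Rightarrow> nat" where
  "p m n = card ((\<lambda>a. {a, rev a}) ` {a. valid_seq m n a})"

end

theory Submission
  imports Defs
begin

(* Let a be a valid (4,n)-sequence, viewed as a list of length 4n in which the number k
   occupies the positions theta_k + j(k+1), j < 4.

   Colour position i by i mod 4; every colour occurs exactly n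
   times.  How many of the four positions of k carry colour r depends only on theta_k
   and k+1 modulo 4: colour 0 is hit an odd number of times iff k+1 is odd, and the hits
   of colours 0 and 1 differ by 2 modulo 4 iff k+1 = 2 (mod 4), by 0 modulo 4 otherwise.
   Summing over k = 1..n gives  n = floor(n/2) (mod 2)  and  2 ceil(n/4) = 0 (mod 4),
   which forces n = 0 or 7 (mod 8)  (lemma valid_seq_4_mod_8).

   The values n = 7 and n = 8 survive this test but admit no valid
   sequence.  A backtracking search is evaluated inside the logic by code_simp, and a
   completeness lemma shows that the search would find every valid sequence
   (lemmas no_valid_seq_4_7, no_valid_seq_4_8). *)


section \<open>Residues of four-term arithmetic progressions\<close>

lemma card_below_4:
  "card {j::nat. j < 4 \<and> Q j} = of_bool (Q 0) + of_bool (Q 1) + of_bool (Q 2) + of_bool (Q 3)"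
proof -
  have "card {j::nat. j < 4 \<and> Q j} = (\<Sum>j<4. of_bool (Q j))"
    by (simp add: Collect_conj_eq flip: sum.inter_filter lessThan_def)
  also have "\<dots> = of_bool (Q 0) + of_bool (Q 1) + of_bool (Q 2) + of_bool (Q 3)"
    by (simp add: eval_nat_numeral)
  finally show ?thesis .
qed

definition residue_hits :: "nat \<Rightarrow> nat \<Rightarrow> nat \<Rightarrow> nat" where
  "residue_hits t d r = card {j. j < 4 \<and> (t + j * d) mod 4 = r}"

lemma residue_hits_mod: "residue_hits t d r = residue_hits (t mod 4) (d mod 4) r"
proof -
  have "(t + j * d) mod 4 = (t mod 4 + j * (d mod 4)) mod 4" for j
    by (rule mod_add_cong) (simp_all add: mod_mult_right_eq)
  then show ?thesis
    unfolding residue_hits_def by (metis (no_types, lifting))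
qed

lemma residue_hits_explicit:
  "residue_hits t d r = of_bool (t mod 4 = r) + of_bool ((t + d) mod 4 = r)
     + of_bool ((t + 2 * d) mod 4 = r) + of_bool ((t + 3 * d) mod 4 = r)"
  unfolding residue_hits_def card_below_4 by simp

text \<open>The two local invariants of the colouring argument for residues t, d < 4: the parity
  of the hits of colour 0, and the difference of the hits of colours 0 and 1 modulo 4.\<close>
lemma residue_hits_small:
  assumes "x < 4" "y < 4"
  shows "residue_hits x y 0 mod 2 = of_bool (odd y)
   \<and> (int (residue_hits x y 0) - int (residue_hits x y 1)) mod 4 = (if y = 2 then 2 else 0)"
proof -
  have below_4: "z = 0 \<or> z = 1 \<or> z = 2 \<or> z = 3" if "z < 4" for z :: nat
    using that by auto
  show ?thesis
    unfolding residue_hits_explicit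
    using below_4[OF assms(1)] below_4[OF assms(2)]
    by (elim disjE) simp_all
qed

lemma residue_hits_invariants:
  "residue_hits t d 0 mod 2 = of_bool (odd d)
   \<and> (int (residue_hits t d 0) - int (residue_hits t d 1)) mod 4 = (if d mod 4 = 2 then 2 else 0)"
proof -
  have "odd d = odd (d mod 4)"
    by (simp add: odd_iff_mod_2_eq_one mod_mod_cancel)
  then show ?thesis
    using residue_hits_small[of "t mod 4" "d mod 4"] residue_hits_mod[of t d] by simp
qed


section \<open>Counting the positions of a valid sequence by colour\<close>

lemma card_residue_class:
  assumes "r < m"
  shows "card {i::nat. i < m * n \<and> i mod m = r} = n"
proof -
  have "{i. i < m * n \<and> i mod m = r} = (\<lambda>j. m * j + r) ` {..<n}"
  proof (intro set_eqI iffI)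
    fix i assume "i \<in> {i. i < m * n \<and> i mod m = r}"
    then have "i = m * (i div m) + r" "i div m < n"
      by (auto simp: less_mult_imp_div_less mult.commute)
    then show "i \<in> (\<lambda>j. m * j + r) ` {..<n}" by blast
  next
    fix i assume "i \<in> (\<lambda>j. m * j + r) ` {..<n}"
    then obtain j where "j < n" "i = m * j + r" by blast
    moreover have "m * j + r < m * n"
    proof -
      have "m * j + r < m * Suc j"
        using assms by simp
      also have "\<dots> \<le> m * n"
        using \<open>j < n\<close> by (intro mult_le_mono2) simp
      finally show ?thesis .
    qed
    ultimately show "i \<in> {i. i < m * n \<and> i mod m = r}" using assms by auto
  qed
  moreover have "inj_on (\<lambda>j. m * j + r) {..<n}"
    using assms by (auto simp: inj_on_def)
  ultimately show ?thesis by (simp add: card_image)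
qed

lemma card_positions_partition:
  assumes "set a \<subseteq> K" "finite K"
  shows "card {i. i < length a \<and> Q i} = (\<Sum>k\<in>K. card {i. i < length a \<and> a ! i = k \<and> Q i})"
proof -
  have "{i. i < length a \<and> Q i} = (\<Union>k\<in>K. {i. i < length a \<and> a ! i = k \<and> Q i})"
    using assms(1) nth_mem by blast
  also have "card \<dots> = (\<Sum>k\<in>K. card {i. i < length a \<and> a ! i = k \<and> Q i})"
    using assms(2) by (intro card_UN_disjoint) auto
  finally show ?thesis .
qed

lemma card_progression_filter:
  assumes "{i. i < length a \<and> a ! i = k} = {t + j * d | j. j < m}" "d > 0"
  shows "card {i. i < length a \<and> a ! i = k \<and> Q i} = card {j. j < m \<and> Q (t + j * d)}"
proof -
  have "{i. i < length a \<and> a ! i = k \<and> Q i} = {i. i < length a \<and> a ! i = k} \<inter> {i. Q i}"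
    by blast
  also have "\<dots> = (\<lambda>j. t + j * d) ` {j. j < m} \<inter> {i. Q i}"
    unfolding assms(1) by (simp add: setcompr_eq_image)
  also have "\<dots> = (\<lambda>j. t + j * d) ` {j. j < m \<and> Q (t + j * d)}"
    by blast
  finally have image:
    "{i. i < length a \<and> a ! i = k \<and> Q i} = (\<lambda>j. t + j * d) ` {j. j < m \<and> Q (t + j * d)}" .
  have "inj (\<lambda>j. t + j * d)"
    using assms(2) by (auto intro: injI)
  then show ?thesis
    unfolding image by (simp add: card_image inj_on_subset)
qed

lemma valid_seq_starts:
  assumes "valid_seq m n a"
  obtains \<theta> where "\<forall>k\<in>{1..n}. {i. i < length a \<and> a ! i = k} = {\<theta> k + j * (k + 1) | j. j < m}"
proof -
  have "\<forall>k\<in>{1..n}. \<exists>\<theta>. {i. i < length a \<and> a ! i = k} = {\<theta> + j * (k + 1) | j. j < m}"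
    using assms unfolding valid_seq_def by blast
  then have "\<exists>\<theta>. \<forall>k\<in>{1..n}. {i. i < length a \<and> a ! i = k} = {\<theta> k + j * (k + 1) | j. j < m}"
    by (rule bchoice)
  then show ?thesis
    by (elim exE) (rule that)
qed

text \<open>Summing the colour counts over all numbers gives the size n of a colour class.\<close>
lemma valid_seq_colour_sums:
  assumes "valid_seq 4 n a"
    and starts: "\<forall>k\<in>{1..n}. {i. i < length a \<and> a ! i = k} = {\<theta> k + j * (k + 1) | j. j < 4}"
    and "r < 4"
  shows "(\<Sum>k\<in>{1..n}. residue_hits (\<theta> k) (k + 1) r) = n"
proof -
  have len: "length a = 4 * n" and entries: "set a \<subseteq> {1..n}"
    using assms(1) unfolding valid_seq_def by simp_all
  have "n = card {i. i < length a \<and> i mod 4 = r}"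
    using card_residue_class[OF \<open>r < 4\<close>, of n] len by simp
  also have "\<dots> = (\<Sum>k\<in>{1..n}. card {i. i < length a \<and> a ! i = k \<and> i mod 4 = r})"
    using entries by (rule card_positions_partition) simp
  also have "\<dots> = (\<Sum>k\<in>{1..n}. residue_hits (\<theta> k) (k + 1) r)"
  proof (rule sum.cong[OF refl])
    fix k assume "k \<in> {1..n}"
    then show "card {i. i < length a \<and> a ! i = k \<and> i mod 4 = r} = residue_hits (\<theta> k) (k + 1) r"
      unfolding residue_hits_def using starts by (intro card_progression_filter) simp_all
  qed
  finally show ?thesis by simp
qed


lemma sum_parity_indicator: "(\<Sum>k\<in>{1..n}. of_bool (odd (k + 1)) :: nat) = n div 2"
  by (induction n) (auto simp: div_Suc)

lemma sum_residue_2_indicator: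
  "(\<Sum>k\<in>{1..n}. if (k + 1) mod 4 = 2 then 2 else 0 :: int) = 2 * int ((n + 3) div 4)"
proof (induction n)
  case 0
  then show ?case by simp
next
  case (Suc n)
  have "(Suc n + 3) div 4 = (n + 3) div 4 + (if (Suc n + 1) mod 4 = 2 then 1 else 0)"
    by presburger
  then show ?case
    using Suc by simp
qed

lemma mod_8_criterion:
  fixes n :: nat
  assumes parity: "n mod 2 = (n div 2) mod 2" and balance: "(2 * int ((n + 3) div 4)) mod 4 = 0"
  shows "n mod 8 = 0 \<or> n mod 8 = 7"
proof -
  define q s where "q = n div 8" and "s = n mod 8"
  have n: "n = 8 * q + s" and "s < 8"
    by (simp_all add: q_def s_def)
  have half_even: "even h" if "(2 * int h) mod 4 = 0" for h :: nat
    using that by presburger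
  have drop_mult_4: "(4 * q + x) mod 2 = x mod 2" for x
    by presburger
  have "n mod 2 = s mod 2"
    unfolding s_def by (simp add: mod_mod_cancel)
  moreover have "n div 2 = 4 * q + s div 2" and "(n + 3) div 4 = 2 * q + (s + 3) div 4"
    unfolding n by simp_all
  ultimately have "s mod 2 = (s div 2) mod 2" and "even ((s + 3) div 4)"
    using parity half_even[OF balance] by (simp_all add: drop_mult_4)
  moreover have "s \<in> {0, 1, 2, 3, 4, 5, 6, 7}"
    using \<open>s < 8\<close> by auto
  ultimately show ?thesis
    unfolding s_def[symmetric] by auto
qed

lemma valid_seq_4_mod_8:
  assumes "valid_seq 4 n a"
  shows "n mod 8 = 0 \<or> n mod 8 = 7"
proof -
  obtain \<theta> where starts:
    "\<forall>k\<in>{1..n}. {i. i < length a \<and> a ! i = k} = {\<theta> k + j * (k + 1) | j. j < 4}"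
    using assms by (rule valid_seq_starts)
  define c where "c r k = residue_hits (\<theta> k) (k + 1) r" for r k
  have sums: "(\<Sum>k\<in>{1..n}. c r k) = n" if "r < 4" for r
    unfolding c_def using assms starts that by (rule valid_seq_colour_sums)
  have parity: "n mod 2 = (n div 2) mod 2"
  proof -
    have "n mod 2 = (\<Sum>k\<in>{1..n}. c 0 k mod 2) mod 2"
      using sums[of 0] by (simp add: mod_sum_eq)
    also have "(\<Sum>k\<in>{1..n}. c 0 k mod 2) = (\<Sum>k\<in>{1..n}. of_bool (odd (k + 1)))"
      unfolding c_def by (simp only: residue_hits_invariants)
    finally show ?thesis
      by (simp only: sum_parity_indicator)
  qed
  have balance: "(2 * int ((n + 3) div 4)) mod 4 = 0"
  proof -
    have "0 = (\<Sum>k\<in>{1..n}. int (c 0 k) - int (c 1 k)) mod 4"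
      using sums[of 0] sums[of 1] by (simp add: sum_subtractf flip: of_nat_sum)
    also have "\<dots> = (\<Sum>k\<in>{1..n}. (int (c 0 k) - int (c 1 k)) mod 4) mod 4"
      by (simp add: mod_sum_eq)
    also have "(\<Sum>k\<in>{1..n}. (int (c 0 k) - int (c 1 k)) mod 4)
        = (\<Sum>k\<in>{1..n}. if (k + 1) mod 4 = 2 then 2 else 0)"
      unfolding c_def by (simp only: residue_hits_invariants)
    finally show ?thesis
      by (simp only: sum_residue_2_indicator)
  qed
  from parity balance show ?thesis
    by (rule mod_8_criterion)
qed


section \<open>Excluding n = 7 and n = 8 by exhaustive search\<close>

definition progression4 :: "nat \<Rightarrow> nat \<Rightarrow> nat set" where
  "progression4 t d = {t, t + d, t + 2 * d, t + 3 * d}"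


lemma progression4_eq: "{t + j * d | j. j < 4} = progression4 t d"
proof -
  have "{t + j * d | j. j < 4} = (\<lambda>j. t + j * d) ` {0, 1, 2, 3}"
    by (auto simp: setcompr_eq_image)
  then show ?thesis
    unfolding progression4_def by simp
qed

text \<open>Backtracking search: can the numbers ks be placed one after another, each k on
  positions t, t+(k+1), t+2(k+1), t+3(k+1) inside [0, L), pairwise disjoint and avoiding
  the already occupied positions?  The conditional guards the recursive call, so that the
  symbolic evaluator explores only admissible branches.\<close>
fun placeable :: "nat \<Rightarrow> nat list \<Rightarrow> nat list \<Rightarrow> bool" where
  "placeable L [] occupied = True"
| "placeable L (k # ks) occupied =
     list_ex (\<lambda>t. if t \<notin> set occupied \<and> t + (k + 1) \<notin> set occupied
                    \<and> t + 2 * (k + 1) \<notin> set occupied \<and> t + 3 * (k + 1) \<notin> set occupied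
                  then placeable L ks (t # (t + (k + 1)) # (t + 2 * (k + 1)) # (t + 3 * (k + 1)) # occupied)
                  else False)
       [0..<L - 3 * (k + 1)]"

lemma placeable_complete:
  assumes "distinct ks"
    and "\<forall>k\<in>set ks. \<theta> k + 3 * (k + 1) < L"
    and "\<forall>k\<in>set ks. \<forall>k'\<in>set ks. k \<noteq> k' \<longrightarrow> progression4 (\<theta> k) (k + 1) \<inter> progression4 (\<theta> k') (k' + 1) = {}"
    and "\<forall>k\<in>set ks. progression4 (\<theta> k) (k + 1) \<inter> set occupied = {}"
  shows "placeable L ks occupied"
  using assms
proof (induction ks arbitrary: occupied)
  case Nil
  then show ?case by simp
next
  case (Cons k ks)
  let ?occupied = "\<theta> k # (\<theta> k + (k + 1)) # (\<theta> k + 2 * (k + 1)) # (\<theta> k + 3 * (k + 1)) # occupied"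
  have rest: "placeable L ks ?occupied"
  proof (rule Cons.IH)
    show "distinct ks" and "\<forall>k\<in>set ks. \<theta> k + 3 * (k + 1) < L"
      and "\<forall>k\<in>set ks. \<forall>k'\<in>set ks. k \<noteq> k' \<longrightarrow> progression4 (\<theta> k) (k + 1) \<inter> progression4 (\<theta> k') (k' + 1) = {}"
      using Cons.prems by simp_all
    show "\<forall>k'\<in>set ks. progression4 (\<theta> k') (k' + 1) \<inter> set ?occupied = {}"
    proof
      fix k' assume k': "k' \<in> set ks"
      then have "k' \<noteq> k"
        using Cons.prems(1) by auto
      then have "progression4 (\<theta> k') (k' + 1) \<inter> progression4 (\<theta> k) (k + 1) = {}"
        using Cons.prems(3) k' by simp
      moreover have "progression4 (\<theta> k') (k' + 1) \<inter> set occupied = {}"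
        using Cons.prems(4) k' by simp
      ultimately show "progression4 (\<theta> k') (k' + 1) \<inter> set ?occupied = {}"
        unfolding progression4_def[of "\<theta> k"] by auto
    qed
  qed
  have start: "\<theta> k \<in> set [0..<L - 3 * (k + 1)]"
    using Cons.prems(2) by (simp add: less_diff_conv)
  have free: "\<theta> k \<notin> set occupied \<and> \<theta> k + (k + 1) \<notin> set occupied
      \<and> \<theta> k + 2 * (k + 1) \<notin> set occupied \<and> \<theta> k + 3 * (k + 1) \<notin> set occupied"
    using Cons.prems(4) unfolding progression4_def by auto
  show ?case
    unfolding placeable.simps list_ex_iff
    using start free rest by auto
qed

lemma valid_seq_placeable:
  assumes "valid_seq 4 n a"
  shows "placeable (4 * n) (rev [1..<n + 1]) []"
proof -
  obtain \<theta> where starts: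
    "\<forall>k\<in>{1..n}. {i. i < length a \<and> a ! i = k} = {\<theta> k + j * (k + 1) | j. j < 4}"
    using assms by (rule valid_seq_starts)
  have len: "length a = 4 * n"
    using assms unfolding valid_seq_def by simp
  have positions: "{i. i < 4 * n \<and> a ! i = k} = progression4 (\<theta> k) (k + 1)" if "k \<in> {1..n}" for k
    using starts[rule_format, OF that] unfolding len progression4_eq .
  have ks: "set (rev [1..<n + 1]) = {1..n}"
    by auto
  have inside: "\<theta> k + 3 * (k + 1) < 4 * n" if "k \<in> {1..n}" for k
  proof -
    have "\<theta> k + 3 * (k + 1) \<in> progression4 (\<theta> k) (k + 1)"
      unfolding progression4_def by simp
    then show ?thesis
      using positions[OF that] by blast
  qed
  have disjoint: "progression4 (\<theta> k) (k + 1) \<inter> progression4 (\<theta> k') (k' + 1) = {}"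
    if "k \<in> {1..n}" "k' \<in> {1..n}" "k \<noteq> k'" for k k'
    unfolding positions[OF that(1), symmetric] positions[OF that(2), symmetric]
    using that(3) by blast
  show ?thesis
  proof (rule placeable_complete[where \<theta> = \<theta>], unfold ks)
    show "\<forall>k\<in>{1..n}. \<theta> k + 3 * (k + 1) < 4 * n"
      using inside by blast
    show "\<forall>k\<in>{1..n}. \<forall>k'\<in>{1..n}. k \<noteq> k' \<longrightarrow>
        progression4 (\<theta> k) (k + 1) \<inter> progression4 (\<theta> k') (k' + 1) = {}"
      using disjoint by blast
  qed simp_all
qed

lemma no_valid_seq_4_7: "\<not> valid_seq 4 7 a"
proof
  assume "valid_seq 4 7 a"
  then have "placeable (4 * 7) (rev [1..<7 + 1]) []"
    by (rule valid_seq_placeable)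
  moreover have "\<not> placeable (4 * 7) (rev [1..<7 + 1]) []"
    by code_simp
  ultimately show False by contradiction
qed

lemma no_valid_seq_4_8: "\<not> valid_seq 4 8 a"
proof
  assume "valid_seq 4 8 a"
  then have "placeable (4 * 8) (rev [1..<8 + 1]) []"
    by (rule valid_seq_placeable)
  moreover have "\<not> placeable (4 * 8) (rev [1..<8 + 1]) []"
    by code_simp
  ultimately show False by contradiction
qed


lemma p_nonzero_imp_valid_seq:
  assumes "p m n \<noteq> 0"
  obtains a where "valid_seq m n a"
proof -
  have "{a. valid_seq m n a} \<noteq> {}"
    using assms unfolding p_def by (metis card.empty image_empty)
  then show ?thesis
    using that by blast
qed

lemma mod_8_witness:
  fixes n :: nat
  assumes "n \<ge> 1" "n mod 8 = 0 \<or> n mod 8 = 7" "n \<noteq> 7" "n \<noteq> 8"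
  shows "\<exists>t::nat. t \<ge> 2 \<and> (n = 8 * t \<or> n = 8 * t - 1)"
proof -
  have n: "n = 8 * (n div 8) + n mod 8"
    by simp
  from assms(2) show ?thesis
  proof
    assume "n mod 8 = 0"
    then show ?thesis
      using n assms(1,4) by (intro exI[of _ "n div 8"]) auto
  next
    assume "n mod 8 = 7"
    then show ?thesis
      using n assms(3) by (intro exI[of _ "n div 8 + 1"]) auto
  qed
qed

theorem proposition2:
  fixes n :: nat
  assumes "n \<ge> 1" and "p 4 n \<noteq> 0"
  shows "\<exists>t::nat. t \<ge> 2 \<and> (n = 8 * t \<or> n = 8 * t - 1)"
proof -
  obtain a where valid: "valid_seq 4 n a"
    using assms(2) by (rule p_nonzero_imp_valid_seq)
  have "n mod 8 = 0 \<or> n mod 8 = 7"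
    using valid by (rule valid_seq_4_mod_8)
  moreover have "n \<noteq> 7" and "n \<noteq> 8"
    using valid no_valid_seq_4_7 no_valid_seq_4_8 by auto
  ultimately show ?thesis
    using assms(1) by (intro mod_8_witness)
qed

end
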